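(* If $\Delta(\Phi_{23},\Phi_{13},\Phi_{12})$ and $\Delta(\Phi_1,\Phi_2,\Phi_3)$ are reciprocal triangles with interior points $\Phi$ and $\Phi_{123}$ respectively, then $$\frac{(\Phi_1-\Phi_2)(\Phi_3-\Phi_{123})}{(\Phi_2-\Phi_3)(\Phi_{123}-\Phi_1)}=\frac{(\Phi_{23}-\Phi_{13})(\Phi_{12}-\Phi)}{(\Phi_{13}-\Phi_{12})(\Phi-\Phi_{23})},$$ that is, $Q(\Phi_1,\Phi_2,\Phi_3,\Phi_{123})=Q(\Phi_{23},\Phi_{13},\Phi_{12},\Phi)$.
   Context: The plane is identified with $\mathbb{C}$. The cross-ratio of four points is $Q(P_1,P_2,P_3,P_4)=\frac{(P_1-P_2)(P_3-P_4)}{(P_2-P_3)(P_4-P_1)}$. Reciprocal triangles: let $\Delta(\Phi_{23},\Phi_{13},\Phi_{12})$ be a non-degenerate triangle and $\Phi$ an additional point; let $\Delta(\Phi_1,\Phi_2,\Phi_3)$ be a non-degenerate triangle whose edges $(\Phi_1,\Phi_2)$, $(\Phi_2,\Phi_3)$, $(\Phi_3,\Phi_1)$ are parallel to the segments $(\Phi,\Phi_{12})$, $(\Phi,\Phi_{23})$, $(\Phi,\Phi_{13})$ respectively. The two triangles are reciprocal with interior points $\Phi$, $\Phi_{123}$ if the point $\Phi_{123}$ is such that the segments $(\Phi_1,\Phi_{123})$, $(\Phi_2,\Phi_{123})$, $(\Phi_3,\Phi_{123})$ are parallel to the edges $(\Phi_{13},\Phi_{12})$, $(\Phi_{12},\Phi_{23})$,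 $(\Phi_{23},\Phi_{13})$ respectively. *)

theory Defs
  imports "HOL-Analysis.Analysis"
begin

definition cross_ratio :: "complex \<Rightarrow> complex \<Rightarrow> complex \<Rightarrow> complex \<Rightarrow> complex" where
  "cross_ratio P1 P2 P3 P4 = ((P1 - P2) * (P3 - P4)) / ((P2 - P3) * (P4 - P1))"

text \<open>The segment (a,b) is parallel to the segment (c,d): both segments are
  non-degenerate and their direction vectors are real multiples of each other.\<close>
definition parallel :: "complex \<Rightarrow> complex \<Rightarrow> complex \<Rightarrow> complex \<Rightarrow> bool" where
  "parallel a b c d \<longleftrightarrow> a \<noteq> b \<and> c \<noteq> d \<and> Im ((b - a) * cnj (d - c)) = 0"

definition nondeg_triangle :: "complex \<Rightarrow> complex \<Rightarrow> complex \<Rightarrow> bool" where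
  "nondeg_triangle a b c \<longleftrightarrow> \<not> collinear {a, b, c}"

definition reciprocal_triangles ::
  "complex \<Rightarrow> complex \<Rightarrow> complex \<Rightarrow> complex \<Rightarrow> complex \<Rightarrow> complex \<Rightarrow> complex \<Rightarrow> complex \<Rightarrow> bool" where
  "reciprocal_triangles F23 F13 F12 F F1 F2 F3 F123 \<longleftrightarrow>
     nondeg_triangle F23 F13 F12 \<and> nondeg_triangle F1 F2 F3 \<and>
     parallel F1 F2 F F12 \<and> parallel F2 F3 F F23 \<and> parallel F3 F1 F F13 \<and>
     parallel F1 F123 F13 F12 \<and> parallel F2 F123 F12 F23 \<and> parallel F3 F123 F23 F13"

end

theory Submission
  imports Defs
begin

(* With u, v, w the vectors from \<Phi> to \<Phi>12, \<Phi>23, \<Phi>13, the parallelisms make the edges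
   \<Phi>2 - \<Phi>1, \<Phi>3 - \<Phi>2, \<Phi>1 - \<Phi>3 real multiples a u, b v, c w and the spokes
   \<Phi>123 - \<Phi>1, \<Phi>123 - \<Phi>2, \<Phi>123 - \<Phi>3 real multiples e (u - w), g (v - u), d (w - v).
   Both cross-ratios then equal u (v - w) / (v (u - w)), the left one up to the real
   factor a d / (b e). Pairing the three closing relations of these vectors with w, u, v
   under the cross product Im (z * cnj z') leaves a p = - b q and e p = g r = - d q for
   p = Im (u * cnj w), q = Im (v * cnj w), r = Im (v * cnj u); since \<Delta>(\<Phi>1,\<Phi>2,\<Phi>3) is
   non-degenerate, p q \<noteq> 0, hence a d = b e. *)

lemma parallel_imp_real_multiple:
  assumes "parallel a b c d"
  obtains t :: real where "b - a = of_real t * (d - c)"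
proof -
  have "Im ((b - a) / (d - c)) = 0"
    using assms by (simp add: parallel_def complex_div_cnj[of "b - a"])
  then obtain t where "(b - a) / (d - c) = of_real t"
    by (metis Reals_cases complex_is_Real_iff)
  with assms have "b - a = of_real t * (d - c)"
    by (auto simp: parallel_def field_simps)
  then show thesis by (rule that)
qed

lemma Im_mult_cnj_neq_0_if_not_collinear:
  assumes "\<not> collinear {x, y, z :: complex}"
  shows "Im ((z - y) * cnj (x - y)) \<noteq> 0"
proof -
  have "(z - y) / (x - y) \<notin> \<real>"
    using assms by (simp add: collinear_3[of x] collinear_iff_Reals)
  then show ?thesis
    by (simp add: complex_div_cnj[of "z - y"] complex_is_Real_iff)
qed

lemma reciprocal_coefficients_relation:
  fixes u v w :: complex and a b c d e g :: real
  assumes closed: "of_real a * u + of_real b * v + of_real c * w = 0"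
    and side1: "of_real e * (u - w) = of_real a * u + of_real g * (v - u)"
    and side2: "of_real g * (v - u) = of_real b * v + of_real d * (w - v)"
    and uw: "Im (u * cnj w) \<noteq> 0" and vw: "Im (v * cnj w) \<noteq> 0"
  shows "a * d = b * e"
proof -
  define p q r where "p = Im (u * cnj w)" and "q = Im (v * cnj w)" and "r = Im (v * cnj u)"
  have "Im ((of_real a * u + of_real b * v + of_real c * w) * cnj w) = a * p + b * q"
    by (simp add: p_def q_def algebra_simps)
  with closed have closed_w: "a * p = - b * q" by simp
  have "Im (of_real e * (u - w) * cnj u) = Im ((of_real a * u + of_real g * (v - u)) * cnj u)"
    using side1 by simp
  then have side1_u: "e * p = g * r" by (simp add: p_def r_def algebra_simps)
  have "Im (of_real g * (v - u) * cnj v) = Im ((of_real b * v + of_real d * (w - v)) * cnj v)"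
    using side2 by simp
  then have side2_v: "g * r = - d * q" by (simp add: q_def r_def algebra_simps)
  have "(a * d) * (p * q) = (b * e) * (p * q)"
    using closed_w side1_u side2_v by (metis mult.assoc mult.commute mult_minus_left)
  then show ?thesis using uw vw by (simp add: p_def q_def)
qed

lemma nondeg_triangle_real_multiple_edges:
  fixes a b c :: real
  assumes nondeg: "nondeg_triangle F1 F2 F3"
    and a: "F2 - F1 = of_real a * u"
    and b: "F3 - F2 = of_real b * v"
    and c: "F1 - F3 = of_real c * w"
  shows "Im (u * cnj w) \<noteq> 0" and "Im (v * cnj w) \<noteq> 0" and "a \<noteq> 0" and "b \<noteq> 0" and "c \<noteq> 0"
proof -
  have "Im ((F3 - F1) * cnj (F2 - F1)) \<noteq> 0"
    using nondeg Im_mult_cnj_neq_0_if_not_collinear[of F2 F1 F3]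
    by (simp add: nondeg_triangle_def insert_commute)
  also have "F3 - F1 = - (of_real c * w)"
    using c by (metis minus_diff_eq)
  finally show "Im (u * cnj w) \<noteq> 0" and "a \<noteq> 0" and "c \<noteq> 0"
    unfolding a by (auto simp: algebra_simps)
  have "Im ((F2 - F3) * cnj (F1 - F3)) \<noteq> 0"
    using nondeg Im_mult_cnj_neq_0_if_not_collinear[of F1 F3 F2]
    by (simp add: nondeg_triangle_def insert_commute)
  also have "F2 - F3 = - (of_real b * v)"
    using b by (metis minus_diff_eq)
  finally show "Im (v * cnj w) \<noteq> 0" and "b \<noteq> 0"
    unfolding c by (auto simp: algebra_simps)
qed

lemma cross_ratio_eq_if_real_multiples:
  fixes a b c d e g :: real
  assumes nondeg: "nondeg_triangle F1 F2 F3"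
    and a: "F2 - F1 = of_real a * (F12 - F)"
    and b: "F3 - F2 = of_real b * (F23 - F)"
    and c: "F1 - F3 = of_real c * (F13 - F)"
    and e: "F123 - F1 = of_real e * (F12 - F13)"
    and g: "F123 - F2 = of_real g * (F23 - F12)"
    and d: "F123 - F3 = of_real d * (F13 - F23)"
  shows "cross_ratio F1 F2 F3 F123 = cross_ratio F23 F13 F12 F"
proof -
  define u v w where "u = F12 - F" and "v = F23 - F" and "w = F13 - F"
  have u_w: "u - w = F12 - F13" and v_u: "v - u = F23 - F12" and w_v: "w - v = F13 - F23"
    by (simp_all add: u_def v_def w_def)
  note edges = nondeg_triangle_real_multiple_edges[OF nondeg
      a[folded u_def] b[folded v_def] c[folded w_def]]
  have "(F2 - F1) + (F3 - F2) + (F1 - F3) = 0"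
    by simp
  then have "of_real a * u + of_real b * v + of_real c * w = 0"
    unfolding a b c u_def v_def w_def .
  moreover have "F123 - F1 = (F2 - F1) + (F123 - F2)"
    by simp
  then have "of_real e * (u - w) = of_real a * u + of_real g * (v - u)"
    unfolding e[folded u_w] a[folded u_def] g[folded v_u] .
  moreover have "F123 - F2 = (F3 - F2) + (F123 - F3)"
    by simp
  then have "of_real g * (v - u) = of_real b * v + of_real d * (w - v)"
    unfolding g[folded v_u] b[folded v_def] d[folded w_v] .
  ultimately have ad_be: "a * d = b * e"
    using reciprocal_coefficients_relation edges(1,2) by blast
  have "e \<noteq> 0"
  proof
    assume "e = 0"
    with ad_be edges(3) have "F123 = F1" "F123 = F3"
      using d e by auto
    with c edges(1,5) show False by (auto simp: w_def)
  qed
  have "cross_ratio F1 F2 F3 F123 = ((v - w) * u) / ((w - u) * - v)"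
  proof -
    have a': "F1 - F2 = - (of_real a * u)" and b': "F2 - F3 = - (of_real b * v)"
      using a b unfolding u_def v_def by (metis minus_diff_eq)+
    have d': "F3 - F123 = - (of_real d * (w - v))"
      using d unfolding w_v by (metis minus_diff_eq)
    have "of_real a * of_real d = (of_real b * of_real e :: complex)"
      using ad_be by (metis of_real_mult)
    moreover have "u \<noteq> 0" "v \<noteq> 0" "u \<noteq> w"
      using edges(1,2) by auto
    ultimately show ?thesis
      using \<open>e \<noteq> 0\<close> edges(4) unfolding cross_ratio_def a' b' d' e[folded u_w]
      by (simp add: field_simps)
  qed
  also have "\<dots> = cross_ratio F23 F13 F12 F"
    by (simp add: cross_ratio_def u_def v_def w_def)
  finally show ?thesis .
qed

theorem corollary1:
  fixes F F1 F2 F3 F12 F13 F23 F123 :: complex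
  assumes "reciprocal_triangles F23 F13 F12 F F1 F2 F3 F123"
  shows "cross_ratio F1 F2 F3 F123 = cross_ratio F23 F13 F12 F"
proof -
  note rec = assms[unfolded reciprocal_triangles_def]
  obtain a where "F2 - F1 = of_real a * (F12 - F)"
    using rec parallel_imp_real_multiple by blast
  moreover obtain b where "F3 - F2 = of_real b * (F23 - F)"
    using rec parallel_imp_real_multiple by blast
  moreover obtain c where "F1 - F3 = of_real c * (F13 - F)"
    using rec parallel_imp_real_multiple by blast
  moreover obtain e where "F123 - F1 = of_real e * (F12 - F13)"
    using rec parallel_imp_real_multiple by blast
  moreover obtain g where "F123 - F2 = of_real g * (F23 - F12)"
    using rec parallel_imp_real_multiple by blast
  moreover obtain d where "F123 - F3 = of_real d * (F13 - F23)"
    using rec parallel_imp_real_multiple by blast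
  ultimately show ?thesis
    using rec cross_ratio_eq_if_real_multiples by blast
qed

end
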